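(* Let $q=r^2$ where $r$ is a prime power, and let $s\le l$ be positive integers. Let $C_1,C_2,\dots,C_s$ be linear codes of the same length $m$ over $\mathbb{F}_q$ and let $A\in M_{s,l}(\mathbb{F}_q)$. If $AA^\dagger$ is anti-diagonal (i.e., its only possibly nonzero entries are in positions $(i,s-i+1)$) and $C_i\subseteq C_{s-i+1}^{\perp_H}$ for all $1\le i\le s$, then the matrix-product code $C_A=[C_1,\dots,C_s]\cdot A$ satisfies $C_A\subseteq C_A^{\perp_H}$.
   Context: For $a\in\mathbb{F}_q$, $\overline{a}:=a^r$. For a matrix $A=[a_{ij}]$ over $\mathbb{F}_q$, $A^\dagger:=[\overline{a_{ji}}]$. The Hermitian inner product on $\mathbb{F}_q^n$ is $\langle u,v\rangle_H=\sum_{i} u_i\overline{v_i}$, and $C^{\perp_H}$ is the dual of $C$ with respect to it. $M_{s,l}(\mathbb{F}_q)$ is the set of $s\times l$ matrices over $\mathbb{F}_q$. If $C_i$ has generator matrix $G_i$ and $A=[a_{ij}]\in M_{s,l}(\mathbb{F}_q)$, the matrix-product code $[C_1,\dots,C_s]\cdot A$ is the linear code of length $ml$ generated by the block matrix whose $(i,j)$ block is $a_{ij}G_i$. *)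

theory Defs
  imports Main "HOL-Computational_Algebra.Primes" "HOL-Library.Cardinality"
begin

text \<open>Vectors of length n over a field are functions nat => 'a vanishing at indices >= n.
  Matrices are functions nat => nat => 'a, indices 0-based.\<close>

definition is_vec :: "nat \<Rightarrow> (nat \<Rightarrow> 'a::zero) \<Rightarrow> bool" where
  "is_vec n v \<longleftrightarrow> (\<forall>i\<ge>n. v i = 0)"

definition lin_code :: "nat \<Rightarrow> (nat \<Rightarrow> 'a::field) set \<Rightarrow> bool" where
  "lin_code n C \<longleftrightarrow> C \<subseteq> {v. is_vec n v} \<and> (\<lambda>_. 0) \<in> C \<and>
     (\<forall>u\<in>C. \<forall>v\<in>C. (\<lambda>i. u i + v i) \<in> C) \<and>
     (\<forall>c. \<forall>u\<in>C. (\<lambda>i. c * u i) \<in> C)"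

definition lin_span :: "(nat \<Rightarrow> 'a::field) set \<Rightarrow> (nat \<Rightarrow> 'a) set" where
  "lin_span S = {v. \<exists>F c. finite F \<and> F \<subseteq> S \<and> v = (\<lambda>k. \<Sum>g\<in>F. c g * g k)}"

text \<open>Conjugation a |-> a^r and the Hermitian inner product on F^n.\<close>
definition herm :: "nat \<Rightarrow> nat \<Rightarrow> (nat \<Rightarrow> 'a::field) \<Rightarrow> (nat \<Rightarrow> 'a) \<Rightarrow> 'a" where
  "herm r n u v = (\<Sum>i<n. u i * (v i) ^ r)"

definition herm_dual :: "nat \<Rightarrow> nat \<Rightarrow> (nat \<Rightarrow> 'a::field) set \<Rightarrow> (nat \<Rightarrow> 'a) set" where
  "herm_dual r n C = {v. is_vec n v \<and> (\<forall>u\<in>C. herm r n u v = 0)}"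

definition AAdag :: "nat \<Rightarrow> nat \<Rightarrow> (nat \<Rightarrow> nat \<Rightarrow> 'a::field) \<Rightarrow> nat \<Rightarrow> nat \<Rightarrow> 'a" where
  "AAdag r l A i k = (\<Sum>j<l. A i j * (A k j) ^ r)"

text \<open>Row of the block generator matrix of [C_1,...,C_s].A coming from the generator g of C_i:
  the j-th block (j < l) is a_{ij} g; length l*m.\<close>
definition block_row :: "nat \<Rightarrow> nat \<Rightarrow> (nat \<Rightarrow> nat \<Rightarrow> 'a::field) \<Rightarrow> nat \<Rightarrow> (nat \<Rightarrow> 'a) \<Rightarrow> nat \<Rightarrow> 'a" where
  "block_row m l A i g = (\<lambda>k. if k < l * m then A i (k div m) * g (k mod m) else 0)"

definition mp_code :: "nat \<Rightarrow> nat \<Rightarrow> nat \<Rightarrow> (nat \<Rightarrow> (nat \<Rightarrow> 'a::field) set) \<Rightarrow>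
    (nat \<Rightarrow> nat \<Rightarrow> 'a) \<Rightarrow> (nat \<Rightarrow> 'a) set" where
  "mp_code m s l C A = lin_span {block_row m l A i g | i g. i < s \<and> g \<in> C i}"

end

theory Submission
  imports Defs "HOL-Number_Theory.Residues"
begin

text \<open>The Hermitian product of the block rows \<open>(a_i1 g, ..., a_il g)\<close> and
  \<open>(a_j1 h, ..., a_jl h)\<close> factors as \<open>(A A^dagger)_ij <g, h>_H\<close>. It vanishes for
  \<open>i + j \<noteq> s + 1\<close> because \<open>A A^dagger\<close> is anti-diagonal, and for \<open>i + j = s + 1\<close>
  because \<open>C_i\<close> is orthogonal to \<open>C_(s-i+1)\<close>. So the generators of \<open>C_A\<close> are pairwise
  orthogonal, and this passes to their span since \<open>x \<mapsto> x^r\<close> is additive, \<open>r\<close> being a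
  power of the characteristic.\<close>

lemma CHAR_eq_if_card_prime_power:
  fixes p k :: nat
  assumes "prime p" "k > 0" "CARD('a::{finite,field}) = p ^ k"
  shows "CHAR('a) = p"
proof -
  have prime_CHAR: "prime CHAR('a)"
    using prime_CHAR_semidom[OF finite_imp_CHAR_pos[where 'a='a]] by simp
  have "CHAR('a) dvd p ^ k"
    using CHAR_dvd_CARD[where 'a='a] assms(3) by simp
  then have "CHAR('a) dvd p"
    using prime_CHAR prime_dvd_power by blast
  then show ?thesis
    using prime_CHAR assms(1) by (simp add: primes_dvd_imp_eq)
qed

lemma sum_lessThan_mult_div_mod:
  fixes f :: "nat \<Rightarrow> nat \<Rightarrow> 'b::comm_monoid_add"
  shows "(\<Sum>t<l * m. f (t div m) (t mod m)) = (\<Sum>j<l. \<Sum>t<m. f j t)"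
proof (cases "m = 0")
  case False
  show ?thesis
  proof (induction l)
    case (Suc l)
    have "(\<Sum>t<Suc l * m. f (t div m) (t mod m))
        = (\<Sum>t<l * m. f (t div m) (t mod m)) + (\<Sum>t\<in>{l * m..<l * m + m}. f (t div m) (t mod m))"
      by (simp add: add.commute lessThan_atLeast0 sum.atLeastLessThan_concat)
    also have "(\<Sum>t\<in>{l * m..<l * m + m}. f (t div m) (t mod m)) = (\<Sum>t<m. f l t)"
      using sum.shift_bounds_nat_ivl[of "\<lambda>t. f (t div m) (t mod m)" 0 "l * m" m] \<open>m \<noteq> 0\<close>
      by (simp add: lessThan_atLeast0 add.commute)
    finally show ?case
      using Suc.IH by simp
  qed simp
qed simp

lemma herm_block_row:
  "herm r (m * l) (block_row m l A i g) (block_row m l A j h) = AAdag r l A i j * herm r m g h"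
proof -
  have "herm r (m * l) (block_row m l A i g) (block_row m l A j h)
      = (\<Sum>t<l * m. (A i (t div m) * g (t mod m)) * (A j (t div m) * h (t mod m)) ^ r)"
    unfolding herm_def block_row_def by (simp add: mult.commute[of m l])
  also have "\<dots> = (\<Sum>u<l. \<Sum>t<m. (A i u * g t) * (A j u * h t) ^ r)"
    by (rule sum_lessThan_mult_div_mod)
  also have "\<dots> = AAdag r l A i j * herm r m g h"
    unfolding herm_def AAdag_def
    by (simp add: sum_distrib_left sum_distrib_right power_mult_distrib mult_ac)
  finally show ?thesis .
qed

lemma is_vec_block_row: "is_vec (m * l) (block_row m l A i g)"
  unfolding is_vec_def block_row_def by (simp add: mult.commute[of m l])

lemma is_vec_lin_span:
  assumes "\<forall>g\<in>R. is_vec n g" "v \<in> lin_span R"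
  shows "is_vec n v"
  using assms unfolding lin_span_def is_vec_def by (fastforce intro: sum.neutral)

lemma herm_sum_sum:
  fixes c d :: "(nat \<Rightarrow> 'a::field) \<Rightarrow> 'a"
  assumes "prime CHAR('a)" "r = CHAR('a) ^ e"
  shows "herm r n (\<lambda>t. \<Sum>g\<in>F. c g * g t) (\<lambda>t. \<Sum>h\<in>G. d h * h t)
       = (\<Sum>g\<in>F. \<Sum>h\<in>G. c g * d h ^ r * herm r n g h)"
proof -
  have "herm r n (\<lambda>t. \<Sum>g\<in>F. c g * g t) (\<lambda>t. \<Sum>h\<in>G. d h * h t)
      = (\<Sum>t<n. \<Sum>g\<in>F. \<Sum>h\<in>G. c g * d h ^ r * (g t * h t ^ r))"
    unfolding herm_def freshmans_dream_sum'[OF assms]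
    by (intro sum.cong refl)
      (simp add: power_mult_distrib sum_distrib_left sum_distrib_right mult_ac sum.swap[of _ G])
  also have "\<dots> = (\<Sum>g\<in>F. \<Sum>h\<in>G. \<Sum>t<n. c g * d h ^ r * (g t * h t ^ r))"
    by (simp add: sum.swap[of _ "{..<n}"])
  also have "\<dots> = (\<Sum>g\<in>F. \<Sum>h\<in>G. c g * d h ^ r * herm r n g h)"
    unfolding herm_def by (simp add: sum_distrib_left)
  finally show ?thesis .
qed

lemma lin_span_subset_herm_dual:
  fixes R :: "(nat \<Rightarrow> 'a::field) set"
  assumes "prime CHAR('a)" "r = CHAR('a) ^ e"
    and "\<forall>g\<in>R. is_vec n g"
    and "\<forall>g\<in>R. \<forall>h\<in>R. herm r n g h = 0"
  shows "lin_span R \<subseteq> herm_dual r n (lin_span R)"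
proof
  fix v assume v: "v \<in> lin_span R"
  then obtain G d where G: "G \<subseteq> R" "v = (\<lambda>t. \<Sum>h\<in>G. d h * h t)"
    unfolding lin_span_def by auto
  have "herm r n u v = 0" if "u \<in> lin_span R" for u
  proof -
    obtain F c where F: "F \<subseteq> R" "u = (\<lambda>t. \<Sum>g\<in>F. c g * g t)"
      using \<open>u \<in> lin_span R\<close> unfolding lin_span_def by auto
    show ?thesis
      unfolding F(2) G(2) herm_sum_sum[OF assms(1,2)]
      using assms(4) F(1) G(1) by (intro sum.neutral ballI) (simp add: subset_iff)
  qed
  then show "v \<in> herm_dual r n (lin_span R)"
    unfolding herm_dual_def using is_vec_lin_span[OF assms(3) v] by blast
qed

theorem theorem3p2:
  fixes r m s l :: nat
    and C :: "nat \<Rightarrow> (nat \<Rightarrow> 'a::{finite,field}) set"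
    and A :: "nat \<Rightarrow> nat \<Rightarrow> 'a"
  assumes "\<exists>p k. prime p \<and> k > 0 \<and> r = p ^ k"
    and "CARD('a) = r ^ 2"
    and "0 < s" and "s \<le> l"
    and "\<forall>i<s. lin_code m (C i)"
    and "\<forall>i<s. \<forall>k<s. i + k \<noteq> s - 1 \<longrightarrow> AAdag r l A i k = 0"
    and "\<forall>i<s. C i \<subseteq> herm_dual r m (C (s - 1 - i))"
  shows "mp_code m s l C A \<subseteq> herm_dual r (m * l) (mp_code m s l C A)"
proof -
  obtain p k where pk: "prime p" "k > 0" "r = p ^ k"
    using assms(1) by blast
  then have "CHAR('a) = p"
    using CHAR_eq_if_card_prime_power[of p "2 * k"] assms(2)
    by (simp add: power_mult mult.commute)
  with pk have r_power_of_CHAR: "prime CHAR('a)" "r = CHAR('a) ^ k"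
    by auto
  define R where "R = {block_row m l A i g | i g. i < s \<and> g \<in> C i}"
  have "herm r (m * l) u v = 0" if in_R: "u \<in> R" "v \<in> R" for u v
  proof -
    obtain i g j h where uv: "u = block_row m l A i g" "v = block_row m l A j h"
      and "i < s" "j < s" "g \<in> C i" "h \<in> C j"
      using in_R unfolding R_def by auto
    have "AAdag r l A i j = 0 \<or> herm r m g h = 0"
    proof (cases "i + j = s - 1")
      case True
      then have "s - 1 - j = i"
        by simp
      then have "h \<in> herm_dual r m (C i)"
        using assms(7) \<open>j < s\<close> \<open>h \<in> C j\<close> by force
      then show ?thesis
        using \<open>g \<in> C i\<close> unfolding herm_dual_def by simp
    qed (use assms(6) \<open>i < s\<close> \<open>j < s\<close> in simp)
    then show ?thesis
      unfolding uv herm_block_row by auto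
  qed
  moreover have "\<forall>g\<in>R. is_vec (m * l) g"
    unfolding R_def using is_vec_block_row by blast
  ultimately show ?thesis
    unfolding mp_code_def R_def[symmetric]
    using lin_span_subset_herm_dual[OF r_power_of_CHAR] by blast
qed

end
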